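(* Let $M\ge1$, $\beta,\hat\beta>0$, and suppose $$\beta^{-1}>1+(M-1)\,m_0(\hat\beta)^2 .$$ Then the only solution $\mathbf{p}\in\mathbb{R}^M$ of $$\mathbf{p}=\big\langle \mathbf{s}\tanh(\beta\,\mathbf{s}\cdot\mathbf{p})\big\rangle_{\mathbf{s},\hat\beta}$$ is $\mathbf{p}=\mathbf{0}$, and consequently $m:=\langle\tanh(\beta\,\mathbf{s}\cdot\mathbf{p})\rangle_{\mathbf{s},\hat\beta}=0$.
   Context: $m_0(\hat\beta)$ is the largest nonnegative solution of $m=\tanh(\hat\beta m)$. $\langle\cdot\rangle_{\mathbf{s},\hat\beta}$ denotes expectation over $\mathbf{s}\in\{-1,1\}^M$ with i.i.d. entries of mean $m_0(\hat\beta)$, i.e. with weight $e^{\hat\beta m_0(\hat\beta)\sum_\mu s_\mu}/(2\cosh(\hat\beta m_0(\hat\beta)))^M$. This is the stationarity equation of $g(\mathbf{p};\hat\beta,\beta)=\log2-\beta|\mathbf{p}|^2/2+\langle\log\cosh(\beta\mathbf{s}\cdot\mathbf{p})\rangle_{\mathbf{s},\hat\beta}$. *)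

theory Defs
  imports "HOL-Analysis.Analysis"
begin

definition m0 :: "real \<Rightarrow> real" where
  "m0 bh = (GREATEST m. 0 \<le> m \<and> m = tanh (bh * m))"

definition spins :: "(real ^ 'n::finite) set" where
  "spins = {s. \<forall>i. s $ i = 1 \<or> s $ i = -1}"

text \<open>Weight of a configuration under the i.i.d. measure with mean m0(bh).\<close>
definition spin_weight :: "real \<Rightarrow> real ^ 'n::finite \<Rightarrow> real" where
  "spin_weight bh s =
     exp (bh * m0 bh * (\<Sum>i\<in>UNIV. s $ i)) / (2 * cosh (bh * m0 bh)) ^ CARD('n)"

definition spin_avg :: "real \<Rightarrow> (real ^ 'n::finite \<Rightarrow> 'b::real_vector) \<Rightarrow> 'b" where
  "spin_avg bh f = (\<Sum>s\<in>spins. spin_weight bh s *\<^sub>R f s)"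

end

theory Submission imports Defs "HOL-Library.FuncSet" begin

text \<open>Take the inner product of the fixed-point equation with \<open>p\<close>. Since \<open>x tanh(\<beta>x) \<le> \<beta>x\<^sup>2\<close>,
  this gives \<open>|p|\<^sup>2 \<le> \<beta>\<langle>(s\<cdot>p)\<^sup>2\<rangle>\<close>. The spins are independent with mean \<open>m\<^sub>0\<close>, so
  \<open>\<langle>(s\<cdot>p)\<^sup>2\<rangle> = m\<^sub>0\<^sup>2 (\<Sum>\<^sub>i p\<^sub>i)\<^sup>2 + (1 - m\<^sub>0\<^sup>2)|p|\<^sup>2\<close>, which by Cauchy-Schwarz is at most
  \<open>(1 + (M - 1) m\<^sub>0\<^sup>2)|p|\<^sup>2\<close>. The hypothesis makes the resulting factor \<open>\<beta>(1 + (M - 1) m\<^sub>0\<^sup>2)\<close>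
  smaller than one, hence \<open>|p|\<^sup>2 = 0\<close>.\<close>

lemma tanh_real_le_self:
  fixes x :: real
  assumes "0 \<le> x"
  shows "tanh x \<le> x"
proof -
  have "(\<lambda>y. y - tanh y) 0 \<le> (\<lambda>y. y - tanh y) x"
  proof (rule DERIV_nonneg_imp_nondecreasing[OF assms])
    fix y :: real
    have "cosh y \<noteq> 0"
      by (metis cosh_real_pos less_irrefl)
    then have "((\<lambda>y. y - tanh y) has_real_derivative 1 - (1 - tanh y ^ 2)) (at y)"
      by (auto intro!: derivative_eq_intros)
    then show "\<exists>d. ((\<lambda>y. y - tanh y) has_real_derivative d) (at y) \<and> 0 \<le> d"
      by force
  qed
  then show ?thesis by simp
qed

lemma abs_tanh_real_le: "\<bar>tanh x\<bar> \<le> \<bar>x :: real\<bar>"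
  by (metis tanh_real_abs tanh_real_le_self abs_ge_zero)

lemma mult_tanh_mult_le:
  fixes b x :: real
  assumes "0 \<le> b"
  shows "x * tanh (b * x) \<le> b * x\<^sup>2"
proof -
  have "x * tanh (b * x) \<le> \<bar>x\<bar> * \<bar>tanh (b * x)\<bar>"
    by (metis abs_ge_self abs_mult)
  also have "\<dots> \<le> \<bar>x\<bar> * \<bar>b * x\<bar>"
    by (simp add: abs_tanh_real_le mult_left_mono)
  also have "\<dots> = b * x\<^sup>2"
    using assms by (simp add: abs_mult power2_eq_square)
  finally show ?thesis .
qed

lemma m0_eq_tanh: "m0 bh = tanh (bh * m0 bh)"
proof -
  define S where "S = {m :: real. 0 \<le> m \<and> m = tanh (bh * m)}"
  have "closed S"
    unfolding S_def
    by (intro closed_Collect_conj closed_Collect_le closed_Collect_eq continuous_intros)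
       (simp add: cosh_real_pos less_imp_neq[symmetric])
  moreover have "bdd_above S"
  proof (rule bdd_aboveI[of _ 1])
    fix m assume "m \<in> S"
    then have "m = tanh (bh * m)"
      by (simp add: S_def)
    then show "m \<le> 1"
      using tanh_real_lt_1[of "bh * m"] by linarith
  qed
  moreover have "0 \<in> S"
    by (simp add: S_def)
  ultimately have "Sup S \<in> S"
    using closed_contains_Sup by blast
  have "m0 bh \<in> S"
    unfolding m0_def
  proof (rule GreatestI2_order[of _ "Sup S"])
    show "0 \<le> Sup S \<and> Sup S = tanh (bh * Sup S)"
      using \<open>Sup S \<in> S\<close> by (simp add: S_def)
    show "m \<le> Sup S" if "0 \<le> m \<and> m = tanh (bh * m)" for m
      using cSup_upper[OF _ \<open>bdd_above S\<close>] that by (simp add: S_def)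
    show "m \<in> S" if "0 \<le> m \<and> m = tanh (bh * m)" for m
      using that by (simp add: S_def)
  qed
  then show ?thesis
    by (simp add: S_def)
qed

lemma sum_spins_prod:
  fixes g :: "'n::finite \<Rightarrow> real \<Rightarrow> real"
  shows "(\<Sum>s\<in>(spins :: (real ^ 'n) set). \<Prod>i\<in>UNIV. g i (s $ i)) = (\<Prod>i\<in>UNIV. g i 1 + g i (-1))"
proof -
  have "(\<Prod>i\<in>UNIV. g i 1 + g i (-1)) = (\<Prod>i\<in>UNIV. \<Sum>y\<in>{1, -1}. g i y)"
    by simp
  also have "\<dots> = (\<Sum>f\<in>PiE UNIV (\<lambda>_. {1, -1}). \<Prod>i\<in>UNIV. g i (f i))"
    by (rule prod_sum_PiE) auto
  also have "\<dots> = (\<Sum>s\<in>(spins :: (real ^ 'n) set). \<Prod>i\<in>UNIV. g i (s $ i))"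
    by (rule sum.reindex_bij_witness[of _ vec_nth vec_lambda])
       (auto simp: spins_def PiE_def extensional_def)
  finally show ?thesis by simp
qed

lemma spin_weight_eq_prod:
  "spin_weight bh (s :: real ^ 'n::finite) =
     (\<Prod>i\<in>UNIV. exp (bh * m0 bh * s $ i) / (2 * cosh (bh * m0 bh)))"
  by (simp add: spin_weight_def exp_sum prod_dividef sum_distrib_left)

lemma spin_weight_nonneg: "0 \<le> spin_weight bh s"
  by (simp add: spin_weight_def cosh_real_pos less_imp_le)

lemma site_weight_sum: "exp a / (2 * cosh a) + exp (a * -1) / (2 * cosh a) = (1 :: real)"
  using cosh_real_pos[of a] by (simp add: cosh_def add_divide_distrib[symmetric])

lemma site_weight_diff: "exp a / (2 * cosh a) - exp (a * -1) / (2 * cosh a) = tanh (a :: real)"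
  by (simp add: tanh_def cosh_def sinh_def diff_divide_distrib[symmetric])

lemma spin_avg_sum:
  "spin_avg bh (\<lambda>s. \<Sum>i\<in>I. f i s) = (\<Sum>i\<in>I. spin_avg bh (f i))"
  unfolding spin_avg_def by (simp add: scaleR_sum_right sum.swap[of _ spins])

lemma spin_avg_scaleR: "spin_avg bh (\<lambda>s. c *\<^sub>R f s) = c *\<^sub>R spin_avg bh f"
  unfolding spin_avg_def by (simp add: scaleR_sum_right mult.commute)

lemma spin_avg_mono:
  assumes "\<And>s. s \<in> spins \<Longrightarrow> f s \<le> g s"
  shows "spin_avg bh f \<le> spin_avg bh (g :: real ^ 'n::finite \<Rightarrow> real)"
  unfolding spin_avg_def
  using assms by (auto intro!: sum_mono mult_left_mono spin_weight_nonneg)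

lemma inner_spin_avg: "x \<bullet> spin_avg bh f = spin_avg bh (\<lambda>s. x \<bullet> f s)"
  unfolding spin_avg_def by (simp add: inner_sum_right)

lemma spin_avg_mult_spins:
  fixes i j :: "'n::finite"
  shows "spin_avg bh (\<lambda>s :: real ^ 'n. s $ i * s $ j) = (if i = j then 1 else (m0 bh)\<^sup>2)"
proof -
  define a where "a = bh * m0 bh"
  \<comment> \<open>The weight is a product over sites, so \<open>s\<^sub>i s\<^sub>j\<close> can be absorbed into the factors at \<open>i\<close> and \<open>j\<close>.\<close>
  define g where "g k x = exp (a * x) / (2 * cosh a) * (if k = i then x else 1) * (if k = j then x else 1)"
    for k x
  have "(\<Prod>k\<in>UNIV. g k (s $ k)) = spin_weight bh s * (s $ i * s $ j)" for s :: "real ^ 'n"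
    unfolding g_def spin_weight_eq_prod a_def by (simp only: prod.distrib prod.delta finite UNIV_I if_True mult.assoc)
  then have "spin_avg bh (\<lambda>s :: real ^ 'n. s $ i * s $ j) = (\<Sum>s\<in>(spins :: (real ^ 'n) set). \<Prod>k\<in>UNIV. g k (s $ k))"
    by (simp add: spin_avg_def)
  also have "\<dots> = (\<Prod>k\<in>UNIV. g k 1 + g k (-1))"
    by (rule sum_spins_prod)
  also have "\<dots> = (\<Prod>k\<in>UNIV. if k = i \<and> k = j then 1 else if k = i \<or> k = j then tanh a else 1)"
    using site_weight_sum[of a] site_weight_diff[of a]
    by (intro prod.cong) (auto simp: g_def)
  also have "\<dots> = (if i = j then 1 else tanh a ^ 2)"
  proof (cases "i = j")
    case True
    then have "\<forall>k. (if k = i \<and> k = j then 1 else if k = i \<or> k = j then tanh a else 1) = 1"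
      by simp
    with True show ?thesis
      by simp
  next
    case False
    then have "- {k. k = i \<and> k = j} \<inter> {k. k = i \<or> k = j} = {i, j}"
      by auto
    with False show ?thesis
      by (simp add: prod.If_cases power2_eq_square)
  qed
  also have "\<dots> = (if i = j then 1 else (m0 bh)\<^sup>2)"
    using m0_eq_tanh[of bh] by (simp add: a_def)
  finally show ?thesis .
qed

lemma spin_avg_inner_square:
  fixes p :: "real ^ 'n::finite"
  shows "spin_avg bh (\<lambda>s. (s \<bullet> p)\<^sup>2) = (m0 bh)\<^sup>2 * (\<Sum>i\<in>UNIV. p $ i)\<^sup>2 + (1 - (m0 bh)\<^sup>2) * (p \<bullet> p)"
proof -
  have square_expand: "(s \<bullet> p)\<^sup>2 = (\<Sum>i\<in>UNIV. \<Sum>j\<in>UNIV. (p $ i * p $ j) *\<^sub>R (s $ i * s $ j))" for s :: "real ^ 'n"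
    by (simp add: inner_vec_def power2_eq_square sum_product algebra_simps)
  have "spin_avg bh (\<lambda>s. (s \<bullet> p)\<^sup>2)
      = (\<Sum>i\<in>UNIV. \<Sum>j\<in>UNIV. p $ i * p $ j * (if i = j then 1 else (m0 bh)\<^sup>2))"
    by (simp only: square_expand spin_avg_sum spin_avg_scaleR) (simp add: spin_avg_mult_spins)
  also have "\<dots> = (\<Sum>i\<in>UNIV. \<Sum>j\<in>UNIV. (m0 bh)\<^sup>2 * (p $ i * p $ j) + (if i = j then (1 - (m0 bh)\<^sup>2) * (p $ i * p $ j) else 0))"
    by (intro sum.cong refl) (auto simp: algebra_simps)
  also have "\<dots> = (m0 bh)\<^sup>2 * (\<Sum>i\<in>UNIV. p $ i)\<^sup>2 + (1 - (m0 bh)\<^sup>2) * (p \<bullet> p)"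
    by (simp add: sum.distrib sum_distrib_left[symmetric] inner_vec_def power2_eq_square sum_product)
  finally show ?thesis .
qed

lemma square_sum_le_card_inner:
  fixes x :: "real ^ 'n::finite"
  shows "(\<Sum>i\<in>UNIV. x $ i)\<^sup>2 \<le> real CARD('n) * (x \<bullet> x)"
  using Cauchy_Schwarz_ineq[of "\<chi> i. 1" x] by (simp add: inner_vec_def)

lemma spin_avg_inner_square_le:
  fixes p :: "real ^ 'n::finite"
  shows "spin_avg bh (\<lambda>s. (s \<bullet> p)\<^sup>2) \<le> (1 + (real CARD('n) - 1) * (m0 bh)\<^sup>2) * (p \<bullet> p)"
  using mult_left_mono[OF square_sum_le_card_inner[of p], of "(m0 bh)\<^sup>2"]
  by (simp add: spin_avg_inner_square algebra_simps)

theorem proposition5: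
  fixes \<beta> bh :: real and p :: "real ^ 'n::finite"
  assumes "\<beta> > 0" and "bh > 0"
    and "1 / \<beta> > 1 + (real CARD('n) - 1) * (m0 bh)\<^sup>2"
    and "p = spin_avg bh (\<lambda>s. tanh (\<beta> * (s \<bullet> p)) *\<^sub>R s)"
  shows "p = 0 \<and> spin_avg bh (\<lambda>s. tanh (\<beta> * (s \<bullet> p))) = 0"
proof -
  define K where "K = 1 + (real CARD('n) - 1) * (m0 bh)\<^sup>2"
  have "p \<bullet> p = p \<bullet> spin_avg bh (\<lambda>s. tanh (\<beta> * (s \<bullet> p)) *\<^sub>R s)"
    using assms(4) by (rule arg_cong)
  also have "\<dots> = spin_avg bh (\<lambda>s. (s \<bullet> p) * tanh (\<beta> * (s \<bullet> p)))"
    by (simp add: inner_spin_avg inner_commute mult.commute)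
  also have "\<dots> \<le> spin_avg bh (\<lambda>s. \<beta> *\<^sub>R (s \<bullet> p)\<^sup>2)"
    using assms(1) by (intro spin_avg_mono) (simp add: mult_tanh_mult_le)
  also have "\<dots> = \<beta> *\<^sub>R spin_avg bh (\<lambda>s. (s \<bullet> p)\<^sup>2)"
    by (rule spin_avg_scaleR)
  also have "\<dots> \<le> \<beta> * (K * (p \<bullet> p))"
    unfolding K_def real_scaleR_def using assms(1) by (intro mult_left_mono spin_avg_inner_square_le) simp
  finally have "(1 - \<beta> * K) * (p \<bullet> p) \<le> 0"
    by (simp add: algebra_simps)
  moreover have "\<beta> * K < 1"
    using assms(1,3) by (simp add: K_def field_simps)
  ultimately have "p \<bullet> p = 0"
    using inner_ge_zero[of p] by (simp add: mult_le_0_iff)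
  then show ?thesis
    by (simp add: spin_avg_def)
qed

end
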